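(* Let $\mathcal{S}$ be a finite skew translation generalized quadrangle of order $s$ with $s$ even, with elation group $G$ (of order $s^3$) and associated $4$-gonal family $(G,\{A_i\}_{i=0}^s,\{A_i^*\}_{i=0}^s)$, and let $U_0:=\bigcap_{i=0}^s A_i^*$. For $g\in G$ define \[\chi_S(g)=\frac{1}{2s^2}\sum_{i=0}^s\Big(|C_G(g)|(s|A_i\cap g^G|+|A_i^*\cap g^G|)-|G/G'|(s|A_i\cap gG'|+|A_i^*\cap gG'|)\Big),\] \[\chi_T(g)=\frac{1}{2s^2}\sum_{i=0}^s\Big(|C_G(g)|(s|A_i\cap g^G|-|A_i^*\cap g^G|)-|G/G'|(s|A_i\cap gG'|-|A_i^*\cap gG'|)\Big).\] Then $\chi_S$ and $\chi_T$ coincide on $U_0$, and for $g\in U_0$, \[\chi_S(g)=\begin{cases}0,& g\in U_0\setminus G',\\ -\frac{s+1}{2s}|G/G'|,& g\in G'\setminus\{1\},\\ \frac{s+1}{2s}(s^3-|G/G'|),& g=1.\end{cases}\]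
   Context: A generalized quadrangle of order $s$: each line has $s+1$ points, each point is on $s+1$ lines, and for each non-incident point-line pair $(P,\ell)$ there is a unique point on $\ell$ collinear with $P$. An elation about $P$ is an automorphism that is the identity or fixes each line through $P$ and no point not collinear with $P$; a symmetry about $P$ is an elation about $P$ fixing every point collinear with $P$. $\mathcal{S}$ is an elation generalized quadrangle with base point $P$ and elation group $G$ if $G$ consists of elations about $P$ and acts regularly on the points not collinear with $P$; it is a skew translation generalized quadrangle if $G$ contains a subgroup of $s$ symmetries about $P$. The associated $4$-gonal family: fix a point $y$ not collinear with $P$, let $M_0,\dots,M_s$ be the lines through $y$, let $z_i$ be the unique point of $M_i$ collinear with $P$, and let $A_i$, $A_i^*$ be the stabilizers in $G$ of $M_i$ and $z_i$ respectively. $g^G$ is the conjugacy class, $C_G(g)$ the centralizer, $G'$ the derived subgroup. (The formulas for $\chi_S,\chi_T$ are the general ones with $t=s$.) *)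

theory Defs
  imports "HOL-Algebra.Algebra"
begin

definition collinear :: "'l set \<Rightarrow> ('p \<Rightarrow> 'l \<Rightarrow> bool) \<Rightarrow> 'p \<Rightarrow> 'p \<Rightarrow> bool" where
  "collinear Lns Inc p q \<longleftrightarrow> (\<exists>l\<in>Lns. Inc p l \<and> Inc q l)"

definition finite_gq_of_order ::
  "'p set \<Rightarrow> 'l set \<Rightarrow> ('p \<Rightarrow> 'l \<Rightarrow> bool) \<Rightarrow> nat \<Rightarrow> bool" where
  "finite_gq_of_order Pts Lns Inc s \<longleftrightarrow>
     finite Pts \<and> finite Lns \<and>
     (\<forall>l\<in>Lns. card {p\<in>Pts. Inc p l} = s + 1) \<and>
     (\<forall>p\<in>Pts. card {l\<in>Lns. Inc p l} = s + 1) \<and>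
     (\<forall>p\<in>Pts. \<forall>q\<in>Pts. \<forall>l\<in>Lns. \<forall>m\<in>Lns.
        p \<noteq> q \<and> Inc p l \<and> Inc q l \<and> Inc p m \<and> Inc q m \<longrightarrow> l = m) \<and>
     (\<forall>p\<in>Pts. \<forall>l\<in>Lns. \<not> Inc p l \<longrightarrow>
        (\<exists>!q. q \<in> Pts \<and> Inc q l \<and> collinear Lns Inc p q))"

definition is_automorphism ::
  "'p set \<Rightarrow> 'l set \<Rightarrow> ('p \<Rightarrow> 'l \<Rightarrow> bool) \<Rightarrow> ('p \<Rightarrow> 'p) \<times> ('l \<Rightarrow> 'l) \<Rightarrow> bool" where
  "is_automorphism Pts Lns Inc \<theta> \<longleftrightarrow>
     bij_betw (fst \<theta>) Pts Pts \<and> bij_betw (snd \<theta>) Lns Lns \<and>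
     (\<forall>p\<in>Pts. \<forall>l\<in>Lns. Inc p l \<longleftrightarrow> Inc (fst \<theta> p) (snd \<theta> l))"

definition is_identity_aut ::
  "'p set \<Rightarrow> 'l set \<Rightarrow> ('p \<Rightarrow> 'p) \<times> ('l \<Rightarrow> 'l) \<Rightarrow> bool" where
  "is_identity_aut Pts Lns \<theta> \<longleftrightarrow> (\<forall>p\<in>Pts. fst \<theta> p = p) \<and> (\<forall>l\<in>Lns. snd \<theta> l = l)"

definition is_elation ::
  "'p set \<Rightarrow> 'l set \<Rightarrow> ('p \<Rightarrow> 'l \<Rightarrow> bool) \<Rightarrow> 'p \<Rightarrow> ('p \<Rightarrow> 'p) \<times> ('l \<Rightarrow> 'l) \<Rightarrow> bool" where
  "is_elation Pts Lns Inc x \<theta> \<longleftrightarrow>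
     is_automorphism Pts Lns Inc \<theta> \<and>
     (is_identity_aut Pts Lns \<theta> \<or>
      ((\<forall>l\<in>Lns. Inc x l \<longrightarrow> snd \<theta> l = l) \<and>
       (\<forall>p\<in>Pts. \<not> collinear Lns Inc x p \<longrightarrow> fst \<theta> p \<noteq> p)))"

definition is_symmetry ::
  "'p set \<Rightarrow> 'l set \<Rightarrow> ('p \<Rightarrow> 'l \<Rightarrow> bool) \<Rightarrow> 'p \<Rightarrow> ('p \<Rightarrow> 'p) \<times> ('l \<Rightarrow> 'l) \<Rightarrow> bool" where
  "is_symmetry Pts Lns Inc x \<theta> \<longleftrightarrow>
     is_elation Pts Lns Inc x \<theta> \<and>
     (\<forall>p\<in>Pts. collinear Lns Inc x p \<longrightarrow> fst \<theta> p = p)"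

definition faithful_aut_action ::
  "('g, 'm) monoid_scheme \<Rightarrow> 'p set \<Rightarrow> 'l set \<Rightarrow> ('p \<Rightarrow> 'l \<Rightarrow> bool) \<Rightarrow>
   ('g \<Rightarrow> ('p \<Rightarrow> 'p) \<times> ('l \<Rightarrow> 'l)) \<Rightarrow> bool" where
  "faithful_aut_action G Pts Lns Inc \<phi> \<longleftrightarrow>
     group G \<and>
     (\<forall>g\<in>carrier G. is_automorphism Pts Lns Inc (\<phi> g)) \<and>
     (\<forall>g\<in>carrier G. \<forall>h\<in>carrier G.
        (\<forall>p\<in>Pts. fst (\<phi> (g \<otimes>\<^bsub>G\<^esub> h)) p = fst (\<phi> g) (fst (\<phi> h) p)) \<and>
        (\<forall>l\<in>Lns. snd (\<phi> (g \<otimes>\<^bsub>G\<^esub> h)) l = snd (\<phi> g) (snd (\<phi> h) l))) \<and>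
     (\<forall>g\<in>carrier G. is_identity_aut Pts Lns (\<phi> g) \<longrightarrow> g = \<one>\<^bsub>G\<^esub>)"

definition is_EGQ ::
  "'p set \<Rightarrow> 'l set \<Rightarrow> ('p \<Rightarrow> 'l \<Rightarrow> bool) \<Rightarrow> nat \<Rightarrow> 'p \<Rightarrow>
   ('g, 'm) monoid_scheme \<Rightarrow> ('g \<Rightarrow> ('p \<Rightarrow> 'p) \<times> ('l \<Rightarrow> 'l)) \<Rightarrow> bool" where
  "is_EGQ Pts Lns Inc s x G \<phi> \<longleftrightarrow>
     finite_gq_of_order Pts Lns Inc s \<and> x \<in> Pts \<and>
     faithful_aut_action G Pts Lns Inc \<phi> \<and>
     (\<forall>g\<in>carrier G. is_elation Pts Lns Inc x (\<phi> g)) \<and>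
     (\<forall>y\<in>Pts. \<forall>z\<in>Pts. \<not> collinear Lns Inc x y \<longrightarrow> \<not> collinear Lns Inc x z \<longrightarrow>
        (\<exists>!g. g \<in> carrier G \<and> fst (\<phi> g) y = z))"

definition is_STGQ ::
  "'p set \<Rightarrow> 'l set \<Rightarrow> ('p \<Rightarrow> 'l \<Rightarrow> bool) \<Rightarrow> nat \<Rightarrow> 'p \<Rightarrow>
   ('g, 'm) monoid_scheme \<Rightarrow> ('g \<Rightarrow> ('p \<Rightarrow> 'p) \<times> ('l \<Rightarrow> 'l)) \<Rightarrow> bool" where
  "is_STGQ Pts Lns Inc s x G \<phi> \<longleftrightarrow>
     is_EGQ Pts Lns Inc s x G \<phi> \<and>
     (\<exists>S. subgroup S G \<and> card S = s \<and> (\<forall>g\<in>S. is_symmetry Pts Lns Inc x (\<phi> g)))"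

text \<open>The lines M_0, ..., M_s through y are indexed by the lines M themselves.\<close>
definition lines_through :: "'l set \<Rightarrow> ('p \<Rightarrow> 'l \<Rightarrow> bool) \<Rightarrow> 'p \<Rightarrow> 'l set" where
  "lines_through Lns Inc y = {M\<in>Lns. Inc y M}"

definition proj_pt :: "'p set \<Rightarrow> 'l set \<Rightarrow> ('p \<Rightarrow> 'l \<Rightarrow> bool) \<Rightarrow> 'p \<Rightarrow> 'l \<Rightarrow> 'p" where
  "proj_pt Pts Lns Inc x M = (THE z. z \<in> Pts \<and> Inc z M \<and> collinear Lns Inc x z)"

definition fam_A :: "('g, 'm) monoid_scheme \<Rightarrow> ('g \<Rightarrow> ('p \<Rightarrow> 'p) \<times> ('l \<Rightarrow> 'l)) \<Rightarrow> 'l \<Rightarrow> 'g set" where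
  "fam_A G \<phi> M = {g\<in>carrier G. snd (\<phi> g) M = M}"

definition fam_Astar :: "('g, 'm) monoid_scheme \<Rightarrow> ('g \<Rightarrow> ('p \<Rightarrow> 'p) \<times> ('l \<Rightarrow> 'l)) \<Rightarrow>
    'p set \<Rightarrow> 'l set \<Rightarrow> ('p \<Rightarrow> 'l \<Rightarrow> bool) \<Rightarrow> 'p \<Rightarrow> 'l \<Rightarrow> 'g set" where
  "fam_Astar G \<phi> Pts Lns Inc x M =
     {g\<in>carrier G. fst (\<phi> g) (proj_pt Pts Lns Inc x M) = proj_pt Pts Lns Inc x M}"

definition conj_class :: "('g, 'm) monoid_scheme \<Rightarrow> 'g \<Rightarrow> 'g set" where
  "conj_class G g = {h \<otimes>\<^bsub>G\<^esub> g \<otimes>\<^bsub>G\<^esub> inv\<^bsub>G\<^esub> h | h. h \<in> carrier G}"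

definition centralizer_of :: "('g, 'm) monoid_scheme \<Rightarrow> 'g \<Rightarrow> 'g set" where
  "centralizer_of G g = {h \<in> carrier G. h \<otimes>\<^bsub>G\<^esub> g = g \<otimes>\<^bsub>G\<^esub> h}"

definition abel_index :: "('g, 'm) monoid_scheme \<Rightarrow> nat" where
  "abel_index G = card (rcosets\<^bsub>G\<^esub> (derived G (carrier G)))"

definition chi_S :: "('g, 'm) monoid_scheme \<Rightarrow> ('g \<Rightarrow> ('p \<Rightarrow> 'p) \<times> ('l \<Rightarrow> 'l)) \<Rightarrow>
    'p set \<Rightarrow> 'l set \<Rightarrow> ('p \<Rightarrow> 'l \<Rightarrow> bool) \<Rightarrow> nat \<Rightarrow> 'p \<Rightarrow> 'p \<Rightarrow> 'g \<Rightarrow> real" where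
  "chi_S G \<phi> Pts Lns Inc s x y g =
     1 / (2 * real s ^ 2) *
     (\<Sum>M\<in>lines_through Lns Inc y.
        real (card (centralizer_of G g)) *
          (real s * real (card (fam_A G \<phi> M \<inter> conj_class G g))
           + real (card (fam_Astar G \<phi> Pts Lns Inc x M \<inter> conj_class G g)))
      - real (abel_index G) *
          (real s * real (card (fam_A G \<phi> M \<inter> (g <#\<^bsub>G\<^esub> derived G (carrier G))))
           + real (card (fam_Astar G \<phi> Pts Lns Inc x M \<inter> (g <#\<^bsub>G\<^esub> derived G (carrier G))))))"

definition chi_T :: "('g, 'm) monoid_scheme \<Rightarrow> ('g \<Rightarrow> ('p \<Rightarrow> 'p) \<times> ('l \<Rightarrow> 'l)) \<Rightarrow>
    'p set \<Rightarrow> 'l set \<Rightarrow> ('p \<Rightarrow> 'l \<Rightarrow> bool) \<Rightarrow> nat \<Rightarrow> 'p \<Rightarrow> 'p \<Rightarrow> 'g \<Rightarrow> real" where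
  "chi_T G \<phi> Pts Lns Inc s x y g =
     1 / (2 * real s ^ 2) *
     (\<Sum>M\<in>lines_through Lns Inc y.
        real (card (centralizer_of G g)) *
          (real s * real (card (fam_A G \<phi> M \<inter> conj_class G g))
           - real (card (fam_Astar G \<phi> Pts Lns Inc x M \<inter> conj_class G g)))
      - real (abel_index G) *
          (real s * real (card (fam_A G \<phi> M \<inter> (g <#\<^bsub>G\<^esub> derived G (carrier G))))
           - real (card (fam_Astar G \<phi> Pts Lns Inc x M \<inter> (g <#\<^bsub>G\<^esub> derived G (carrier G))))))"

definition U0 :: "('g, 'm) monoid_scheme \<Rightarrow> ('g \<Rightarrow> ('p \<Rightarrow> 'p) \<times> ('l \<Rightarrow> 'l)) \<Rightarrow>
    'p set \<Rightarrow> 'l set \<Rightarrow> ('p \<Rightarrow> 'l \<Rightarrow> bool) \<Rightarrow> 'p \<Rightarrow> 'p \<Rightarrow> 'g set" where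
  "U0 G \<phi> Pts Lns Inc x y =
     carrier G \<inter> (\<Inter>M\<in>lines_through Lns Inc y. fam_Astar G \<phi> Pts Lns Inc x M)"

end

theory Submission
  imports Defs
begin

(* The orbit map g \<mapsto> g y identifies G with the s^3 points opposite x, and A_i^* with the
   s^2 of them collinear with z_i.  Two such sets share at most s points, so A_i^* \<inter> A_j^* is
   exactly the group S of symmetries about x, which is normal because G preserves x^\<bottom>.
   Counting shows that the A_i^* cover G, and the geometry of the quadrangle gives
   G = A_i^* A_j^*; such a partition of G/S forces every A_i^* to be normal and G' \<le> S.
   As U_0 \<le> S, the conjugacy class and the coset gG' entering chi lie in S, which is contained
   in every A_i^* and meets every A_i only in 1.  Both sums then collapse to
   (s+1)/(2s) (|C_G(g)| [g = 1] - |G/G'| [g \<in> G']). *)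

section \<open>Group-theoretic lemmas\<close>

lemma (in group) inv_mult_cancel_left [simp]:
  "a \<in> carrier G \<Longrightarrow> x \<in> carrier G \<Longrightarrow> inv a \<otimes> (a \<otimes> x) = x"
  by (simp add: m_assoc[symmetric])

lemma (in group) mult_inv_cancel_left [simp]:
  "a \<in> carrier G \<Longrightarrow> x \<in> carrier G \<Longrightarrow> a \<otimes> (inv a \<otimes> x) = x"
  by (simp add: m_assoc[symmetric])

lemma (in group) card_l_coset:
  assumes "H \<subseteq> carrier G" and "g \<in> carrier G"
  shows "card (l_coset G g H) = card H"
proof -
  have "l_coset G g H = (\<otimes>) g ` H" unfolding l_coset_def by auto
  then show ?thesis
    by (simp add: card_image inj_on_subset[OF inj_on_cmult[OF assms(2)] assms(1)])
qed

lemma (in group) one_in_l_coset_iff: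
  assumes H: "subgroup H G" and g: "g \<in> carrier G"
  shows "\<one> \<in> l_coset G g H \<longleftrightarrow> g \<in> H"
proof
  assume "\<one> \<in> l_coset G g H"
  then obtain h where h: "h \<in> H" "\<one> = g \<otimes> h" unfolding l_coset_def by auto
  then have "inv h = g"
    using inv_equality[OF h(2)[symmetric]] subgroup.mem_carrier[OF H h(1)] g by blast
  then show "g \<in> H" using subgroup.m_inv_closed[OF H h(1)] by simp
next
  assume "g \<in> H"
  then have "g \<otimes> inv g \<in> l_coset G g H"
    unfolding l_coset_def using subgroup.m_inv_closed[OF H] by blast
  then show "\<one> \<in> l_coset G g H" using g by simp
qed

lemma (in group) one_in_conj_class_iff:
  assumes g: "g \<in> carrier G"
  shows "\<one> \<in> conj_class G g \<longleftrightarrow> g = \<one>"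
proof
  assume "\<one> \<in> conj_class G g"
  then obtain h where h: "h \<in> carrier G" "h \<otimes> g \<otimes> inv h = \<one>"
    unfolding conj_class_def by auto
  have "g = inv h \<otimes> (h \<otimes> g \<otimes> inv h) \<otimes> h" using g h(1) by (simp add: m_assoc)
  also have "\<dots> = \<one>" unfolding h(2) using h(1) by simp
  finally show "g = \<one>" .
next
  assume "g = \<one>"
  then have "\<one> \<otimes> g \<otimes> inv \<one> = \<one>" by simp
  then show "\<one> \<in> conj_class G g" unfolding conj_class_def by force
qed

lemma (in group) card_conj_class_mult_card_centralizer:
  assumes g: "g \<in> carrier G"
  shows "card (conj_class G g) * card (centralizer_of G g) = order G"
proof -
  let ?conj = "\<lambda>h. \<lambda>k \<in> carrier G. h \<otimes> k \<otimes> inv h"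
  interpret group_action G "carrier G" ?conj by (rule action_by_conjugation)
  have "orbit G ?conj g = conj_class G g"
    unfolding orbit_def conj_class_def using g by auto
  moreover have "h \<otimes> g \<otimes> inv h = g \<longleftrightarrow> h \<otimes> g = g \<otimes> h" if "h \<in> carrier G" for h
    using inv_solve_right'[of g "h \<otimes> g" h] that g by simp
  then have "stabilizer G ?conj g = centralizer_of G g"
    unfolding stabilizer_def centralizer_of_def using g by auto
  ultimately show ?thesis using orbit_stabilizer_theorem[OF g] by simp
qed

lemma (in group) conj_class_subset_normal:
  assumes "N \<lhd> G" and "g \<in> N"
  shows "conj_class G g \<subseteq> N"
  unfolding conj_class_def using normal.inv_op_closed2[OF assms(1) _ assms(2)] by blast

lemma (in group) commutator_mult_right:
  assumes "g \<in> carrier G" "n \<in> carrier G" "p \<in> carrier G"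
  shows "g \<otimes> (n \<otimes> p) \<otimes> inv g \<otimes> inv (n \<otimes> p) =
         (g \<otimes> n \<otimes> inv g \<otimes> inv n) \<otimes> (n \<otimes> (g \<otimes> p \<otimes> inv g \<otimes> inv p) \<otimes> inv n)"
  using assms by (simp add: m_assoc inv_mult_group)

lemma (in group) commutator_in_Int_normal:
  assumes A: "A \<lhd> G" and B: "B \<lhd> G" and a: "a \<in> A" and b: "b \<in> B"
  shows "a \<otimes> b \<otimes> inv a \<otimes> inv b \<in> A \<inter> B"
proof
  have sA: "subgroup A G" and sB: "subgroup B G" using A B normal_imp_subgroup by auto
  have aG: "a \<in> carrier G" using subgroup.mem_carrier[OF sA a] .
  have bG: "b \<in> carrier G" using subgroup.mem_carrier[OF sB b] .
  have "a \<otimes> (b \<otimes> inv a \<otimes> inv b) \<in> A"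
    using normal.inv_op_closed2[OF A bG subgroup.m_inv_closed[OF sA a]] a sA
    by (simp add: subgroup.m_closed)
  then show "a \<otimes> b \<otimes> inv a \<otimes> inv b \<in> A" using aG bG by (simp add: m_assoc)
  show "a \<otimes> b \<otimes> inv a \<otimes> inv b \<in> B"
    using normal.inv_op_closed2[OF B aG b] subgroup.m_inv_closed[OF sB b] sB
    by (simp add: subgroup.m_closed)
qed

locale subgroup_partition_mod = group G for G (structure) +
  fixes S :: "'a set" and I :: "'i set" and A :: "'i \<Rightarrow> 'a set"
  assumes normal_core: "S \<lhd> G"
    and subgroup_part: "i \<in> I \<Longrightarrow> subgroup (A i) G"
    and part_Int: "i \<in> I \<Longrightarrow> j \<in> I \<Longrightarrow> i \<noteq> j \<Longrightarrow> A i \<inter> A j = S"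
    and parts_cover: "(\<Union>i\<in>I. A i) = carrier G"
    and parts_mult: "i \<in> I \<Longrightarrow> j \<in> I \<Longrightarrow> i \<noteq> j \<Longrightarrow> q \<in> carrier G \<Longrightarrow>
      \<exists>a\<in>A i. \<exists>b\<in>A j. q = a \<otimes> b"
begin

lemma normal_part:
  assumes i: "i \<in> I"
  shows "A i \<lhd> G"
proof -
  have conj_in: "g \<otimes> a \<otimes> inv g \<in> A i" if g: "g \<in> carrier G" and a: "a \<in> A i" for g a
  proof -
    have aG: "a \<in> carrier G" using subgroup.mem_carrier[OF subgroup_part[OF i] a] .
    have "g \<otimes> a \<otimes> inv g \<in> carrier G" using g aG by simp
    then obtain k where k: "k \<in> I" "g \<otimes> a \<otimes> inv g \<in> A k"
      using parts_cover by blast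
    show ?thesis
    proof (cases "k = i")
      case True
      then show ?thesis using k by simp
    next
      case False
      obtain n m where n: "n \<in> A k" and m: "m \<in> A i" and g_eq: "g = n \<otimes> m"
        using parts_mult[OF k(1) i False g] by blast
      have nG: "n \<in> carrier G" using subgroup.mem_carrier[OF subgroup_part[OF k(1)] n] .
      have mG: "m \<in> carrier G" using subgroup.mem_carrier[OF subgroup_part[OF i] m] .
      define t where "t = m \<otimes> a \<otimes> inv m"
      have "t \<in> A i"
        unfolding t_def using subgroup_part[OF i] m a
        by (simp add: subgroup.m_closed subgroup.m_inv_closed)
      moreover have "t = inv n \<otimes> (g \<otimes> a \<otimes> inv g) \<otimes> n"
        unfolding g_eq t_def using nG mG aG by (simp add: m_assoc inv_mult_group)
      then have "t \<in> A k"
        using subgroup_part[OF k(1)] n k(2)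
        by (simp add: subgroup.m_closed subgroup.m_inv_closed)
      ultimately have "t \<in> S" using part_Int[OF i k(1)] False by blast
      moreover have "a = inv m \<otimes> t \<otimes> m" unfolding t_def using mG aG by (simp add: m_assoc)
      ultimately have "a \<in> S" using normal.inv_op_closed1[OF normal_core mG] by simp
      then have "g \<otimes> a \<otimes> inv g \<in> S" using normal.inv_op_closed2[OF normal_core g] by simp
      then show ?thesis using part_Int[OF i k(1)] False by blast
    qed
  qed
  show ?thesis by (simp add: normal_inv_iff subgroup_part[OF i] conj_in)
qed

lemma derived_subset_core:
  assumes "finite I" and "3 \<le> card I"
  shows "derived G (carrier G) \<subseteq> S"
proof -
  have "g \<otimes> h \<otimes> inv g \<otimes> inv h \<in> S" if g: "g \<in> carrier G" and h: "h \<in> carrier G" for g h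
  proof -
    obtain i where i: "i \<in> I" "g \<in> A i" using parts_cover g by blast
    have "2 \<le> card (I - {i})" using assms i(1) by (simp add: card_Diff_singleton)
    then obtain J where "J \<subseteq> I - {i}" "card J = 2" by (rule obtain_subset_with_card_n)
    then obtain j k where j: "j \<in> I" "j \<noteq> i" and k: "k \<in> I" "k \<noteq> i" and jk: "j \<noteq> k"
      by (auto simp: card_2_iff)
    obtain n p where n: "n \<in> A j" and p: "p \<in> A k" and h_eq: "h = n \<otimes> p"
      using parts_mult[OF j(1) k(1) jk h] by blast
    have nG: "n \<in> carrier G" using subgroup.mem_carrier[OF subgroup_part[OF j(1)] n] .
    have pG: "p \<in> carrier G" using subgroup.mem_carrier[OF subgroup_part[OF k(1)] p] .
    have "g \<otimes> n \<otimes> inv g \<otimes> inv n \<in> S"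
      using commutator_in_Int_normal[OF normal_part normal_part, OF i(1) j(1) i(2) n]
        part_Int[OF i(1) j(1)] j(2) by auto
    moreover have "g \<otimes> p \<otimes> inv g \<otimes> inv p \<in> S"
      using commutator_in_Int_normal[OF normal_part normal_part, OF i(1) k(1) i(2) p]
        part_Int[OF i(1) k(1)] k(2) by auto
    then have "n \<otimes> (g \<otimes> p \<otimes> inv g \<otimes> inv p) \<otimes> inv n \<in> S"
      using normal.inv_op_closed2[OF normal_core nG] by simp
    ultimately show ?thesis
      unfolding h_eq commutator_mult_right[OF g nG pG]
      by (rule subgroup.m_closed[OF normal_imp_subgroup[OF normal_core]])
  qed
  then have "derived_set G (carrier G) \<subseteq> S" by blast
  then show ?thesis
    unfolding derived_def by (rule generate_subgroup_incl[OF _ normal_imp_subgroup[OF normal_core]])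
qed

end

section \<open>Counting in a generalized quadrangle\<close>

locale gq =
  fixes Pts :: "'p set" and Lns :: "'l set" and Inc :: "'p \<Rightarrow> 'l \<Rightarrow> bool" and s :: nat
  assumes finite_gq: "finite_gq_of_order Pts Lns Inc s"
begin

abbreviation col :: "'p \<Rightarrow> 'p \<Rightarrow> bool" where
  "col \<equiv> collinear Lns Inc"

definition opposite :: "'p \<Rightarrow> 'p set" where
  "opposite p = {q \<in> Pts. \<not> col p q}"

lemma finite_Pts: "finite Pts"
  using finite_gq unfolding finite_gq_of_order_def by blast

lemma finite_Lns: "finite Lns"
  using finite_gq unfolding finite_gq_of_order_def by blast

lemma card_points_on: "l \<in> Lns \<Longrightarrow> card {p \<in> Pts. Inc p l} = s + 1"
  using finite_gq unfolding finite_gq_of_order_def by blast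

lemma card_lines_through: "p \<in> Pts \<Longrightarrow> card {l \<in> Lns. Inc p l} = s + 1"
  using finite_gq unfolding finite_gq_of_order_def by blast

lemma line_unique:
  "\<lbrakk>p \<in> Pts; q \<in> Pts; l \<in> Lns; m \<in> Lns; p \<noteq> q; Inc p l; Inc q l; Inc p m; Inc q m\<rbrakk> \<Longrightarrow> l = m"
  using finite_gq unfolding finite_gq_of_order_def by blast

lemma ex1_collinear_on_line:
  "\<lbrakk>p \<in> Pts; l \<in> Lns; \<not> Inc p l\<rbrakk> \<Longrightarrow> \<exists>!q. q \<in> Pts \<and> Inc q l \<and> col p q"
  using finite_gq unfolding finite_gq_of_order_def by blast

lemma collinearI: "l \<in> Lns \<Longrightarrow> Inc p l \<Longrightarrow> Inc q l \<Longrightarrow> col p q"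
  unfolding collinear_def by blast

lemma collinearE:
  assumes "col p q"
  obtains l where "l \<in> Lns" "Inc p l" "Inc q l"
  using assms unfolding collinear_def by blast

lemma collinear_commute: "col p q \<longleftrightarrow> col q p"
  unfolding collinear_def by blast

lemma finite_opposite: "finite (opposite p)"
  unfolding opposite_def using finite_Pts by simp

lemma ex_line_through:
  assumes "p \<in> Pts"
  shows "\<exists>l \<in> Lns. Inc p l"
proof -
  have "{l \<in> Lns. Inc p l} \<noteq> {}" using card_lines_through[OF assms] by force
  then show ?thesis by blast
qed

lemma card_lines_through_but:
  "p \<in> Pts \<Longrightarrow> L \<in> Lns \<Longrightarrow> Inc p L \<Longrightarrow> card ({l \<in> Lns. Inc p l} - {L}) = s"
  using card_lines_through[of p] finite_Lns by (simp add: card_Diff_singleton)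

lemma card_points_on_but:
  "l \<in> Lns \<Longrightarrow> w \<in> Pts \<Longrightarrow> Inc w l \<Longrightarrow> card ({p \<in> Pts. Inc p l} - {w}) = s"
  using card_points_on[of l] finite_Pts by (simp add: card_Diff_singleton)

lemma opposite_if_on_other_line:
  assumes x: "x \<in> Pts" and w: "w \<in> Pts" "w \<noteq> x" and L: "L \<in> Lns" "Inc x L" "Inc w L"
    and K: "K \<in> Lns" "Inc w K" "K \<noteq> L" and p: "p \<in> Pts" "Inc p K" "p \<noteq> w"
  shows "p \<in> opposite x"
proof -
  have "\<not> Inc x K" using line_unique[OF x w(1) K(1) L(1)] w K L by auto
  then have "\<exists>!q. q \<in> Pts \<and> Inc q K \<and> col x q" by (rule ex1_collinear_on_line[OF x K(1)])
  moreover have "col x w" using collinearI[OF L(1,2,3)] .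
  ultimately have "\<not> col x p" using w K(2) p by blast
  then show ?thesis unfolding opposite_def using p(1) by simp
qed

lemma card_opposite_collinear:
  assumes x: "x \<in> Pts" and w: "w \<in> Pts" "col x w" "w \<noteq> x"
  shows "card {u \<in> opposite x. col u w} = s * s"
proof -
  obtain L where L: "L \<in> Lns" "Inc x L" "Inc w L" using w(2) by (rule collinearE)
  let ?I = "{l \<in> Lns. Inc w l} - {L}"
  let ?F = "\<lambda>K. {p \<in> Pts. Inc p K} - {w}"
  have "{u \<in> opposite x. col u w} = (\<Union>K\<in>?I. ?F K)"
  proof (intro equalityI subsetI)
    fix u assume "u \<in> {u \<in> opposite x. col u w}"
    then have u: "u \<in> Pts" "\<not> col x u" "col u w" unfolding opposite_def by auto
    then obtain K where K: "K \<in> Lns" "Inc u K" "Inc w K" by (blast elim: collinearE)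
    have "u \<noteq> w" using u w by auto
    moreover have "K \<noteq> L" using K L u collinearI by blast
    ultimately show "u \<in> (\<Union>K\<in>?I. ?F K)" using K u by blast
  next
    fix u assume "u \<in> (\<Union>K\<in>?I. ?F K)"
    then obtain K where K: "K \<in> Lns" "Inc w K" "K \<noteq> L" and u: "u \<in> Pts" "Inc u K" "u \<noteq> w"
      by blast
    have "u \<in> opposite x" by (rule opposite_if_on_other_line[OF x w(1,3) L K u])
    moreover have "col u w" using collinearI[OF K(1) u(2) K(2)] .
    ultimately show "u \<in> {u \<in> opposite x. col u w}" by blast
  qed
  also have "card \<dots> = (\<Sum>K\<in>?I. card (?F K))"
  proof (rule card_UN_disjoint)
    show "\<forall>K\<in>?I. \<forall>K'\<in>?I. K \<noteq> K' \<longrightarrow> ?F K \<inter> ?F K' = {}"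
      using line_unique[of _ w] w(1) by blast
  qed (use finite_Lns finite_Pts in auto)
  also have "\<dots> = s * s"
    using card_points_on_but[OF _ w(1)] card_lines_through_but[OF w(1) L(1,3)] by simp
  finally show ?thesis .
qed

lemma card_opposite:
  assumes x: "x \<in> Pts"
  shows "card (opposite x) = s ^ 3"
proof -
  obtain L where L: "L \<in> Lns" "Inc x L" using ex_line_through[OF x] by blast
  let ?W = "{w \<in> Pts. Inc w L} - {x}"
  have proj: "\<exists>!w. w \<in> Pts \<and> Inc w L \<and> col u w" if "u \<in> opposite x" for u
  proof -
    have "u \<in> Pts" "\<not> col x u" using that unfolding opposite_def by auto
    then show ?thesis using ex1_collinear_on_line L collinearI by blast
  qed
  have "opposite x = (\<Union>w\<in>?W. {u \<in> opposite x. col u w})"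
  proof (intro equalityI subsetI)
    fix u assume u: "u \<in> opposite x"
    then obtain w where w: "w \<in> Pts" "Inc w L" "col u w" using proj by blast
    have "w \<noteq> x" using w(3) u collinear_commute unfolding opposite_def by auto
    then show "u \<in> (\<Union>w\<in>?W. {u \<in> opposite x. col u w})" using w u by blast
  qed blast
  also have "card \<dots> = (\<Sum>w\<in>?W. card {u \<in> opposite x. col u w})"
  proof (rule card_UN_disjoint)
    show "\<forall>w\<in>?W. \<forall>w'\<in>?W. w \<noteq> w' \<longrightarrow> {u \<in> opposite x. col u w} \<inter> {u \<in> opposite x. col u w'} = {}"
      using proj by blast
  qed (use finite_Pts finite_opposite in auto)
  also have "\<dots> = s * (s * s)"
    using card_opposite_collinear[OF x] card_points_on_but[OF L(1) x L(2)] collinearI[OF L(1,2)]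
    by simp
  finally show ?thesis by (simp add: power3_eq_cube)
qed

lemma card_opposite_collinear_both_le:
  assumes x: "x \<in> Pts" and w: "w \<in> Pts" "col x w" "w \<noteq> x"
    and w': "w' \<in> Pts" "\<not> col w w'"
  shows "card {u \<in> opposite x. col u w \<and> col u w'} \<le> s"
proof -
  obtain L where L: "L \<in> Lns" "Inc x L" "Inc w L" using w(2) by (rule collinearE)
  let ?I = "{l \<in> Lns. Inc w l} - {L}"
  define proj where "proj K = (THE q. q \<in> Pts \<and> Inc q K \<and> col w' q)" for K
  have "{u \<in> opposite x. col u w \<and> col u w'} \<subseteq> proj ` ?I"
  proof
    fix u assume "u \<in> {u \<in> opposite x. col u w \<and> col u w'}"
    then have u: "u \<in> Pts" "\<not> col x u" "col u w" "col u w'" unfolding opposite_def by auto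
    then obtain K where K: "K \<in> Lns" "Inc u K" "Inc w K" by (blast elim: collinearE)
    have "K \<noteq> L" using K L u collinearI by blast
    moreover have "proj K = u"
      unfolding proj_def
    proof (rule the1_equality)
      show "\<exists>!q. q \<in> Pts \<and> Inc q K \<and> col w' q"
        using ex1_collinear_on_line[OF w'(1) K(1)] K w'(2) collinearI by blast
      show "u \<in> Pts \<and> Inc u K \<and> col w' u" using u K collinear_commute by blast
    qed
    ultimately show "u \<in> proj ` ?I" using K by blast
  qed
  then have "card {u \<in> opposite x. col u w \<and> col u w'} \<le> card (proj ` ?I)"
    using finite_Lns by (simp add: card_mono)
  also have "\<dots> \<le> card ?I" using finite_Lns by (simp add: card_image_le)
  also have "\<dots> = s" by (rule card_lines_through_but[OF w(1) L(1,3)])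
  finally show ?thesis .
qed

lemma ex_opposite_collinear_both:
  assumes s: "0 < s" and x: "x \<in> Pts" and w: "w \<in> Pts" "col x w" "w \<noteq> x"
    and w': "w' \<in> Pts" "\<not> col w w'"
  shows "\<exists>u \<in> opposite x. col u w \<and> col u w'"
proof -
  obtain L where L: "L \<in> Lns" "Inc x L" "Inc w L" using w(2) by (rule collinearE)
  have "{l \<in> Lns. Inc w l} - {L} \<noteq> {}"
    using card_lines_through_but[OF w(1) L(1,3)] s by force
  then obtain K where K: "K \<in> Lns" "Inc w K" "K \<noteq> L" by blast
  have "\<not> Inc w' K" using K w'(2) collinearI by blast
  then obtain q where q: "q \<in> Pts" "Inc q K" "col w' q"
    using ex1_collinear_on_line[OF w'(1) K(1)] by blast
  have "q \<noteq> w" using q(3) w'(2) collinear_commute by blast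
  then have "q \<in> opposite x" by (rule opposite_if_on_other_line[OF x w(1,3) L K q(1,2)])
  moreover have "col q w" using collinearI[OF K(1) q(2) K(2)] .
  ultimately show ?thesis using q(3) collinear_commute by blast
qed

end

section \<open>Elation groups\<close>

locale egq =
  fixes Pts :: "'p set" and Lns :: "'l set" and Inc :: "'p \<Rightarrow> 'l \<Rightarrow> bool" and s :: nat
    and x :: 'p and G :: "('g, 'm) monoid_scheme" (structure)
    and \<phi> :: "'g \<Rightarrow> ('p \<Rightarrow> 'p) \<times> ('l \<Rightarrow> 'l)"
  assumes egq: "is_EGQ Pts Lns Inc s x G \<phi>"

sublocale egq \<subseteq> gq Pts Lns Inc s
  using egq unfolding is_EGQ_def by unfold_locales blast

sublocale egq \<subseteq> group G
  using egq unfolding is_EGQ_def faithful_aut_action_def by blast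

context egq
begin

abbreviation pt_act :: "'g \<Rightarrow> 'p \<Rightarrow> 'p" where
  "pt_act g \<equiv> fst (\<phi> g)"

abbreviation ln_act :: "'g \<Rightarrow> 'l \<Rightarrow> 'l" where
  "ln_act g \<equiv> snd (\<phi> g)"

lemma x_in: "x \<in> Pts"
  using egq unfolding is_EGQ_def by blast

lemma automorphism: "g \<in> carrier G \<Longrightarrow> is_automorphism Pts Lns Inc (\<phi> g)"
  using egq unfolding is_EGQ_def faithful_aut_action_def by blast

lemma pt_act_mult:
  "g \<in> carrier G \<Longrightarrow> h \<in> carrier G \<Longrightarrow> p \<in> Pts \<Longrightarrow> pt_act (g \<otimes> h) p = pt_act g (pt_act h p)"
  using egq unfolding is_EGQ_def faithful_aut_action_def by blast

lemma ln_act_mult: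
  "g \<in> carrier G \<Longrightarrow> h \<in> carrier G \<Longrightarrow> l \<in> Lns \<Longrightarrow> ln_act (g \<otimes> h) l = ln_act g (ln_act h l)"
  using egq unfolding is_EGQ_def faithful_aut_action_def by blast

lemma elation: "g \<in> carrier G \<Longrightarrow> is_elation Pts Lns Inc x (\<phi> g)"
  using egq unfolding is_EGQ_def by blast

lemma regular:
  "u \<in> opposite x \<Longrightarrow> v \<in> opposite x \<Longrightarrow> \<exists>!g. g \<in> carrier G \<and> pt_act g u = v"
  using egq unfolding is_EGQ_def opposite_def by blast

lemma pt_act_in: "g \<in> carrier G \<Longrightarrow> p \<in> Pts \<Longrightarrow> pt_act g p \<in> Pts"
  using automorphism unfolding is_automorphism_def by (meson bij_betwE)

lemma ln_act_in: "g \<in> carrier G \<Longrightarrow> l \<in> Lns \<Longrightarrow> ln_act g l \<in> Lns"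
  using automorphism unfolding is_automorphism_def by (meson bij_betwE)

lemma inj_on_pt_act: "g \<in> carrier G \<Longrightarrow> inj_on (pt_act g) Pts"
  using automorphism unfolding is_automorphism_def bij_betw_def by blast

lemma inj_on_ln_act: "g \<in> carrier G \<Longrightarrow> inj_on (ln_act g) Lns"
  using automorphism unfolding is_automorphism_def bij_betw_def by blast

lemma Inc_act_iff:
  "g \<in> carrier G \<Longrightarrow> p \<in> Pts \<Longrightarrow> l \<in> Lns \<Longrightarrow> Inc (pt_act g p) (ln_act g l) \<longleftrightarrow> Inc p l"
  using automorphism unfolding is_automorphism_def by blast

lemma ln_act_fixes_lines_through_x:
  "g \<in> carrier G \<Longrightarrow> l \<in> Lns \<Longrightarrow> Inc x l \<Longrightarrow> ln_act g l = l"
  using elation unfolding is_elation_def is_identity_aut_def by blast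

lemma Inc_act_line_through_x:
  "g \<in> carrier G \<Longrightarrow> p \<in> Pts \<Longrightarrow> l \<in> Lns \<Longrightarrow> Inc x l \<Longrightarrow> Inc (pt_act g p) l \<longleftrightarrow> Inc p l"
  using Inc_act_iff ln_act_fixes_lines_through_x by metis

lemma pt_act_one: "p \<in> Pts \<Longrightarrow> pt_act \<one> p = p"
  using inj_onD[OF inj_on_pt_act, of \<one> "pt_act \<one> p" p] pt_act_mult[of \<one> \<one> p] pt_act_in by simp

lemma ln_act_one: "l \<in> Lns \<Longrightarrow> ln_act \<one> l = l"
  using inj_onD[OF inj_on_ln_act, of \<one> "ln_act \<one> l" l] ln_act_mult[of \<one> \<one> l] ln_act_in by simp

lemma pt_act_inv_act: "g \<in> carrier G \<Longrightarrow> p \<in> Pts \<Longrightarrow> pt_act (inv g) (pt_act g p) = p"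
  using pt_act_mult[of "inv g" g p] pt_act_one by simp

lemma pt_act_act_inv: "g \<in> carrier G \<Longrightarrow> p \<in> Pts \<Longrightarrow> pt_act g (pt_act (inv g) p) = p"
  using pt_act_mult[of g "inv g" p] pt_act_one by simp

lemma collinear_act_iff:
  assumes g: "g \<in> carrier G" and p: "p \<in> Pts" and q: "q \<in> Pts"
  shows "col (pt_act g p) (pt_act g q) \<longleftrightarrow> col p q"
proof
  assume "col (pt_act g p) (pt_act g q)"
  then obtain l where l: "l \<in> Lns" "Inc (pt_act g p) l" "Inc (pt_act g q) l" by (rule collinearE)
  then obtain l' where "l' \<in> Lns" "l = ln_act g l'"
    using automorphism[OF g] unfolding is_automorphism_def by (metis bij_betw_imp_surj_on imageE)
  then show "col p q" using l Inc_act_iff[OF g] p q collinearI by metis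
next
  assume "col p q"
  then obtain l where "l \<in> Lns" "Inc p l" "Inc q l" by (rule collinearE)
  then show "col (pt_act g p) (pt_act g q)"
    using Inc_act_iff[OF g] p q collinearI ln_act_in[OF g] by metis
qed

lemma collinear_x_act:
  assumes g: "g \<in> carrier G" and p: "p \<in> Pts" and "col x p"
  shows "col x (pt_act g p)"
proof -
  obtain l where "l \<in> Lns" "Inc x l" "Inc p l" using \<open>col x p\<close> by (rule collinearE)
  then show ?thesis using Inc_act_line_through_x[OF g p] collinearI by blast
qed

lemma collinear_x_act_iff:
  assumes g: "g \<in> carrier G" and p: "p \<in> Pts"
  shows "col x (pt_act g p) \<longleftrightarrow> col x p"
  using collinear_x_act[OF g p] collinear_x_act[OF inv_closed[OF g] pt_act_in[OF g p]]
    pt_act_inv_act[OF g p] by auto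

lemma act_opposite: "g \<in> carrier G \<Longrightarrow> p \<in> opposite x \<Longrightarrow> pt_act g p \<in> opposite x"
  unfolding opposite_def using collinear_x_act_iff pt_act_in by auto

lemma bij_betw_orbit_map:
  assumes u: "u \<in> opposite x"
  shows "bij_betw (\<lambda>g. pt_act g u) (carrier G) (opposite x)"
proof (rule bij_betw_imageI)
  show "inj_on (\<lambda>g. pt_act g u) (carrier G)"
    using regular[OF u] act_opposite[OF _ u] by (auto intro!: inj_onI)
  show "(\<lambda>g. pt_act g u) ` carrier G = opposite x"
    using regular[OF u] act_opposite[OF _ u] by blast
qed

lemma order_eq: "u \<in> opposite x \<Longrightarrow> order G = s ^ 3"
  unfolding order_def using bij_betw_same_card[OF bij_betw_orbit_map] card_opposite[OF x_in] by simp

lemma finite_carrier: "u \<in> opposite x \<Longrightarrow> finite (carrier G)"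
  using bij_betw_finite[OF bij_betw_orbit_map] finite_opposite by blast

definition stab :: "'p \<Rightarrow> 'g set" where
  "stab w = {g \<in> carrier G. pt_act g w = w}"

lemma subgroup_stab:
  assumes w: "w \<in> Pts"
  shows "subgroup (stab w) G"
proof
  show "stab w \<subseteq> carrier G" unfolding stab_def by auto
  show "a \<otimes> b \<in> stab w" if "a \<in> stab w" "b \<in> stab w" for a b
    using that w pt_act_mult unfolding stab_def by auto
  show "\<one> \<in> stab w" unfolding stab_def using pt_act_one[OF w] by simp
  show "inv a \<in> stab w" if "a \<in> stab w" for a
    using that pt_act_inv_act[of a w] w unfolding stab_def by auto
qed

lemma stab_iff_collinear:
  assumes u: "u \<in> opposite x" and w: "w \<in> Pts" "col x w" "col u w" and g: "g \<in> carrier G"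
  shows "g \<in> stab w \<longleftrightarrow> col (pt_act g u) w"
proof
  have uP: "u \<in> Pts" using u unfolding opposite_def by simp
  assume "g \<in> stab w"
  then show "col (pt_act g u) w"
    using collinear_act_iff[OF g uP w(1)] w(3) unfolding stab_def by simp
next
  have uP: "u \<in> Pts" using u unfolding opposite_def by simp
  assume c: "col (pt_act g u) w"
  obtain L where L: "L \<in> Lns" "Inc x L" "Inc w L" using w(2) by (rule collinearE)
  have gu: "pt_act g u \<in> opposite x" by (rule act_opposite[OF g u])
  then have "\<not> Inc (pt_act g u) L" using L collinearI unfolding opposite_def by blast
  then have "\<exists>!q. q \<in> Pts \<and> Inc q L \<and> col (pt_act g u) q"
    using ex1_collinear_on_line[OF _ L(1)] gu unfolding opposite_def by blast
  moreover have "col (pt_act g u) (pt_act g w)" using collinear_act_iff[OF g uP w(1)] w(3) by simp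
  moreover have "Inc (pt_act g w) L" using Inc_act_line_through_x[OF g w(1) L(1,2)] L(3) by simp
  ultimately have "pt_act g w = w" using c w(1) L(3) pt_act_in[OF g w(1)] by blast
  then show "g \<in> stab w" unfolding stab_def using g by simp
qed

lemma orbit_map_stab:
  assumes u: "u \<in> opposite x" and w: "w \<in> Pts" "col x w" "col u w"
  shows "bij_betw (\<lambda>g. pt_act g u) (stab w) {v \<in> opposite x. col v w}"
proof (rule bij_betw_subset[OF bij_betw_orbit_map[OF u]])
  show "stab w \<subseteq> carrier G" unfolding stab_def by auto
  show "(\<lambda>g. pt_act g u) ` stab w = {v \<in> opposite x. col v w}"
  proof (intro equalityI subsetI)
    fix v assume "v \<in> (\<lambda>g. pt_act g u) ` stab w"
    then obtain g where g: "g \<in> stab w" "v = pt_act g u" by blast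
    then have "g \<in> carrier G" unfolding stab_def by simp
    then show "v \<in> {v \<in> opposite x. col v w}"
      using g act_opposite[OF _ u] stab_iff_collinear[OF u w] by blast
  next
    fix v assume v: "v \<in> {v \<in> opposite x. col v w}"
    then obtain g where g: "g \<in> carrier G" "pt_act g u = v" using regular[OF u] by blast
    then have "g \<in> stab w" using stab_iff_collinear[OF u w g(1)] v by simp
    then show "v \<in> (\<lambda>g. pt_act g u) ` stab w" using g(2) by blast
  qed
qed

lemma collinear_opposite_ne: "u \<in> opposite x \<Longrightarrow> col u w \<Longrightarrow> w \<noteq> x"
  unfolding opposite_def using collinear_commute by auto

lemma card_stab:
  assumes u: "u \<in> opposite x" and w: "w \<in> Pts" "col x w" "col u w"
  shows "card (stab w) = s * s"
  using bij_betw_same_card[OF orbit_map_stab[OF u w]]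
    card_opposite_collinear[OF x_in w(1,2) collinear_opposite_ne[OF u w(3)]] by simp

lemma card_stab_Int_le:
  assumes u: "u \<in> opposite x" and w: "w \<in> Pts" "col x w" "col u w"
    and w': "w' \<in> Pts" "col x w'" "col u w'" and ww': "\<not> col w w'"
  shows "card (stab w \<inter> stab w') \<le> s"
proof -
  have "inj_on (\<lambda>g. pt_act g u) (stab w \<inter> stab w')"
    using orbit_map_stab[OF u w] unfolding bij_betw_def by (blast intro: inj_on_subset)
  moreover have "(\<lambda>g. pt_act g u) ` (stab w \<inter> stab w') \<subseteq> {v \<in> opposite x. col v w \<and> col v w'}"
    using orbit_map_stab[OF u w] orbit_map_stab[OF u w'] unfolding bij_betw_def by blast
  ultimately have "card (stab w \<inter> stab w') \<le> card {v \<in> opposite x. col v w \<and> col v w'}"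
    using finite_opposite by (simp add: card_inj_on_le)
  also have "\<dots> \<le> s"
    by (rule card_opposite_collinear_both_le
        [OF x_in w(1,2) collinear_opposite_ne[OF u w(3)] w'(1) ww'])
  finally show ?thesis .
qed

lemma pt_act_fixes_x:
  assumes s: "0 < s" and g: "g \<in> carrier G"
  shows "pt_act g x = x"
proof (rule ccontr)
  assume ne: "pt_act g x \<noteq> x"
  obtain L where L: "L \<in> Lns" "Inc x L" using ex_line_through[OF x_in] by blast
  have "{l \<in> Lns. Inc x l} - {L} \<noteq> {}"
    using card_lines_through_but[OF x_in L] s by force
  then obtain L' where L': "L' \<in> Lns" "Inc x L'" "L' \<noteq> L" by blast
  have "Inc (pt_act g x) L" "Inc (pt_act g x) L'"
    using Inc_act_line_through_x[OF g x_in] L L' by auto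
  then show False using line_unique[OF pt_act_in[OF g x_in] x_in L(1) L'(1) ne] L L' by blast
qed

lemma stab_transitive_on_line:
  assumes s: "0 < s" and u: "u \<in> opposite x" and w: "w \<in> Pts" "col x w" "col u w"
    and w': "w' \<in> Pts" "col u w'" and ww': "\<not> col w w'"
    and L: "L \<in> Lns" "Inc x L" "Inc w' L" and v: "v \<in> Pts" "Inc v L" "v \<noteq> x"
  shows "\<exists>m \<in> stab w. pt_act m w' = v"
proof -
  have uP: "u \<in> Pts" using u unfolding opposite_def by simp
  have "\<not> Inc w L" using L ww' collinearI by blast
  then have "\<exists>!r. r \<in> Pts \<and> Inc r L \<and> col w r" by (rule ex1_collinear_on_line[OF w(1) L(1)])
  then have wv: "\<not> col w v"
    using v x_in L(2) w(2) collinear_commute by blast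
  obtain u' where u': "u' \<in> opposite x" "col u' w" "col u' v"
    using ex_opposite_collinear_both[OF s x_in w(1,2) collinear_opposite_ne[OF u w(3)] v(1) wv]
    by blast
  obtain m where m: "m \<in> carrier G" "pt_act m u = u'" using regular[OF u u'(1)] by blast
  have "\<not> Inc u' L" using u'(1) L collinearI unfolding opposite_def by blast
  then have "\<exists>!r. r \<in> Pts \<and> Inc r L \<and> col u' r"
    using ex1_collinear_on_line[OF _ L(1)] u'(1) unfolding opposite_def by blast
  moreover have "col u' (pt_act m w')"
    using collinear_act_iff[OF m(1) uP w'(1)] w'(2) m(2) by simp
  moreover have "Inc (pt_act m w') L"
    using Inc_act_line_through_x[OF m(1) w'(1) L(1,2)] L(3) by simp
  ultimately have "pt_act m w' = v" using v u'(3) pt_act_in[OF m(1) w'(1)] by blast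
  moreover have "m \<in> stab w" using stab_iff_collinear[OF u w m(1)] m(2) u'(2) by simp
  ultimately show ?thesis by blast
qed

lemma stab_mult_stab:
  assumes s: "0 < s" and u: "u \<in> opposite x" and w: "w \<in> Pts" "col x w" "col u w"
    and w': "w' \<in> Pts" "col x w'" "col u w'" and ww': "\<not> col w w'" and q: "q \<in> carrier G"
  shows "\<exists>m \<in> stab w. \<exists>n \<in> stab w'. q = m \<otimes> n"
proof -
  obtain L where L: "L \<in> Lns" "Inc x L" "Inc w' L" using w'(2) by (rule collinearE)
  define v where "v = pt_act q w'"
  have "v \<in> Pts" "Inc v L"
    unfolding v_def using pt_act_in[OF q w'(1)] Inc_act_line_through_x[OF q w'(1) L(1,2)] L(3)
    by auto
  moreover have "v \<noteq> x"
    using pt_act_fixes_x[OF s q] inj_onD[OF inj_on_pt_act[OF q], of w' x] x_in w'(1)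
      collinear_opposite_ne[OF u w'(3)] unfolding v_def by auto
  ultimately obtain m where m: "m \<in> stab w" "pt_act m w' = v"
    using stab_transitive_on_line[OF s u w w'(1,3) ww' L] by blast
  have mG: "m \<in> carrier G" using m(1) unfolding stab_def by simp
  have "inv m \<otimes> q \<in> stab w'"
    using mG q pt_act_mult[OF inv_closed[OF mG] q w'(1)] m(2)[unfolded v_def, symmetric]
      pt_act_inv_act[OF mG w'(1)]
    unfolding stab_def by simp
  moreover have "q = m \<otimes> (inv m \<otimes> q)" using mG q by simp
  ultimately show ?thesis using m(1) by blast
qed

end

section \<open>The 4-gonal family of a skew translation generalized quadrangle\<close>

lemma chi_summand_collapse:
  fixes s c k I d a e :: real
  assumes "c * k = I * d" and "s \<noteq> 0"
  shows "1 / (2 * s ^ 2) * ((s + 1) * (c * (s * a + k) - I * (s * e + d))) =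
      (s + 1) / (2 * s) * (c * a - I * e)"
    and "1 / (2 * s ^ 2) * ((s + 1) * (c * (s * a - k) - I * (s * e - d))) =
      (s + 1) / (2 * s) * (c * a - I * e)"
proof -
  have "c * (s * a + k) - I * (s * e + d) = s * (c * a - I * e)"
    and "c * (s * a - k) - I * (s * e - d) = s * (c * a - I * e)"
    using assms(1) by (simp_all add: algebra_simps)
  moreover have "1 / (2 * s ^ 2) * ((s + 1) * (s * t)) = (s + 1) / (2 * s) * t" for t
    using assms(2) by (simp add: field_simps power2_eq_square)
  ultimately show "1 / (2 * s ^ 2) * ((s + 1) * (c * (s * a + k) - I * (s * e + d))) =
      (s + 1) / (2 * s) * (c * a - I * e)"
    and "1 / (2 * s ^ 2) * ((s + 1) * (c * (s * a - k) - I * (s * e - d))) =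
      (s + 1) / (2 * s) * (c * a - I * e)"
    by simp_all
qed

locale stgq_family = egq Pts Lns Inc s x G \<phi>
  for Pts :: "'p set" and Lns :: "'l set" and Inc s x and G :: "('g, 'm) monoid_scheme" (structure)
    and \<phi> +
  fixes S :: "'g set" and y :: 'p
  assumes subgroup_S: "subgroup S G" and card_S: "card S = s"
    and symmetry_S: "g \<in> S \<Longrightarrow> is_symmetry Pts Lns Inc x (\<phi> g)"
    and thick: "2 \<le> s"
    and y_in: "y \<in> Pts" and y_not_col: "\<not> col x y"
begin

abbreviation Y :: "'l set" where
  "Y \<equiv> lines_through Lns Inc y"

abbreviation z :: "'l \<Rightarrow> 'p" where
  "z M \<equiv> proj_pt Pts Lns Inc x M"

lemma y_opposite: "y \<in> opposite x"
  unfolding opposite_def using y_in y_not_col by simp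

lemma mem_Y_iff: "M \<in> Y \<longleftrightarrow> M \<in> Lns \<and> Inc y M"
  unfolding lines_through_def by simp

lemma finite_Y: "finite Y"
  unfolding lines_through_def using finite_Lns by simp

lemma card_Y: "card Y = s + 1"
  unfolding lines_through_def by (rule card_lines_through[OF y_in])

lemma ex_other_line:
  assumes "M \<in> Y"
  shows "\<exists>N \<in> Y. N \<noteq> M"
proof -
  have "card (Y - {M}) = s" using card_Y finite_Y assms by (simp add: card_Diff_singleton)
  then have "Y - {M} \<noteq> {}" using thick by force
  then show ?thesis by blast
qed

lemma ex1_z:
  assumes "M \<in> Y"
  shows "\<exists>!q. q \<in> Pts \<and> Inc q M \<and> col x q"
proof (rule ex1_collinear_on_line[OF x_in])
  show "M \<in> Lns" using assms mem_Y_iff by blast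
  show "\<not> Inc x M" using assms y_not_col collinearI mem_Y_iff by blast
qed

lemma z_in: "M \<in> Y \<Longrightarrow> z M \<in> Pts"
  and Inc_z: "M \<in> Y \<Longrightarrow> Inc (z M) M"
  and col_x_z: "M \<in> Y \<Longrightarrow> col x (z M)"
  using theI'[OF ex1_z] unfolding proj_pt_def by blast+

lemma col_y_z: "M \<in> Y \<Longrightarrow> col y (z M)"
  using Inc_z collinearI mem_Y_iff by blast

lemma z_ne_y: "M \<in> Y \<Longrightarrow> z M \<noteq> y"
  using col_x_z y_not_col by blast

lemma not_col_z:
  assumes M: "M \<in> Y" and N: "N \<in> Y" and MN: "M \<noteq> N"
  shows "\<not> col (z M) (z N)"
proof
  assume "col (z M) (z N)"
  then obtain K where K: "K \<in> Lns" "Inc (z M) K" "Inc (z N) K" by (rule collinearE)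
  have M': "M \<in> Lns" "Inc y M" and N': "N \<in> Lns" "Inc y N" using M N mem_Y_iff by auto
  have "z M \<noteq> z N"
  proof
    assume "z M = z N"
    then have "M = N"
      using line_unique[OF y_in z_in[OF M] M'(1) N'(1) z_ne_y[OF M, symmetric] M'(2) Inc_z[OF M]
          N'(2)] Inc_z[OF N]
      by simp
    then show False using MN by simp
  qed
  moreover have "\<not> Inc y K"
  proof
    assume "Inc y K"
    then have "K = M" "K = N"
      using line_unique[OF y_in z_in[OF M] K(1) M'(1) z_ne_y[OF M, symmetric] _ K(2) M'(2)
          Inc_z[OF M]]
        line_unique[OF y_in z_in[OF N] K(1) N'(1) z_ne_y[OF N, symmetric] _ K(3) N'(2)
          Inc_z[OF N]]
      by simp_all
    then show False using MN by simp
  qed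
  then have "\<exists>!q. q \<in> Pts \<and> Inc q K \<and> col y q" by (rule ex1_collinear_on_line[OF y_in K(1)])
  ultimately show False using K z_in[OF M] z_in[OF N] col_y_z[OF M] col_y_z[OF N] by blast
qed

lemma fam_Astar_eq_stab: "fam_Astar G \<phi> Pts Lns Inc x M = stab (z M)"
  unfolding fam_Astar_def stab_def ..

lemma S_subset_carrier: "S \<subseteq> carrier G"
  using subgroup.subset[OF subgroup_S] .

lemma S_subset_stab: "w \<in> Pts \<Longrightarrow> col x w \<Longrightarrow> S \<subseteq> stab w"
  using symmetry_S S_subset_carrier unfolding is_symmetry_def stab_def by blast

lemma stab_z_Int:
  assumes M: "M \<in> Y" and N: "N \<in> Y" and MN: "M \<noteq> N"
  shows "stab (z M) \<inter> stab (z N) = S"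
proof (rule card_seteq[symmetric])
  show "finite (stab (z M) \<inter> stab (z N))"
    using finite_carrier[OF y_opposite] unfolding stab_def by simp
  show "S \<subseteq> stab (z M) \<inter> stab (z N)"
    using S_subset_stab z_in col_x_z M N by blast
  show "card (stab (z M) \<inter> stab (z N)) \<le> card S"
    using card_stab_Int_le[OF y_opposite z_in[OF M] col_x_z[OF M] col_y_z[OF M]
        z_in[OF N] col_x_z[OF N] col_y_z[OF N] not_col_z[OF M N MN]] card_S by simp
qed

lemma mem_S_if_fixes_perp:
  assumes g: "g \<in> carrier G" and fixed: "\<And>w. w \<in> Pts \<Longrightarrow> col x w \<Longrightarrow> pt_act g w = w"
  shows "g \<in> S"
proof -
  obtain M where M: "M \<in> Y" using card_Y by fastforce
  then obtain N where N: "N \<in> Y" "N \<noteq> M" using ex_other_line by blast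
  have "g \<in> stab (z M) \<inter> stab (z N)"
    unfolding stab_def using g fixed z_in col_x_z M N by simp
  then show ?thesis using stab_z_Int[OF M N(1)] N(2) by simp
qed

lemma normal_S: "S \<lhd> G"
proof -
  have "g \<otimes> a \<otimes> inv g \<in> S" if g: "g \<in> carrier G" and a: "a \<in> S" for g a
  proof (rule mem_S_if_fixes_perp)
    have aG: "a \<in> carrier G" using a S_subset_carrier by blast
    then show "g \<otimes> a \<otimes> inv g \<in> carrier G" using g by simp
    fix w assume w: "w \<in> Pts" "col x w"
    have "pt_act a (pt_act (inv g) w) = pt_act (inv g) w"
      using S_subset_stab[OF pt_act_in[OF inv_closed[OF g] w(1)]
          collinear_x_act[OF inv_closed[OF g] w]] a
      unfolding stab_def by blast
    then show "pt_act (g \<otimes> a \<otimes> inv g) w = w"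
      using pt_act_mult aG g w pt_act_act_inv pt_act_in by simp
  qed
  then show ?thesis by (simp add: normal_inv_iff subgroup_S)
qed

lemma U0_subset_S: "U0 G \<phi> Pts Lns Inc x y \<subseteq> S"
proof -
  obtain M where M: "M \<in> Y" using card_Y by fastforce
  then obtain N where N: "N \<in> Y" "N \<noteq> M" using ex_other_line by blast
  have "U0 G \<phi> Pts Lns Inc x y \<subseteq> stab (z M) \<inter> stab (z N)"
    unfolding U0_def fam_Astar_eq_stab using M N(1) by blast
  then show ?thesis using stab_z_Int[OF M N(1)] N(2) by simp
qed

lemma stab_z_cover: "(\<Union>M\<in>Y. stab (z M)) = carrier G"
proof -
  have finite_stab: "finite (stab w)" for w
    using finite_carrier[OF y_opposite] unfolding stab_def by simp
  have S_stab_z: "S \<subseteq> stab (z M)" if "M \<in> Y" for M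
    using S_subset_stab[OF z_in col_x_z] that by blast
  let ?U = "\<Union>M\<in>Y. stab (z M) - S"
  obtain M0 where "M0 \<in> Y" using card_Y by fastforce
  then have "(\<Union>M\<in>Y. stab (z M)) = S \<union> ?U" using S_stab_z by blast
  moreover have "card (S \<union> ?U) = card S + card ?U"
    by (rule card_Un_disjoint)
      (use finite_stab finite_Y finite_subset[OF S_stab_z] \<open>M0 \<in> Y\<close> in auto)
  moreover have "card ?U = (\<Sum>M\<in>Y. card (stab (z M) - S))"
    by (rule card_UN_disjoint) (use finite_Y finite_stab stab_z_Int in auto)
  moreover have "card (stab (z M) - S) = s * s - s" if "M \<in> Y" for M
    using card_Diff_subset[OF _ S_stab_z[OF that]] card_stab[OF y_opposite z_in col_x_z col_y_z]
      that finite_subset[OF S_stab_z[OF that] finite_stab] card_S by simp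
  ultimately have "card (\<Union>M\<in>Y. stab (z M)) = s + (s + 1) * (s * s - s)"
    using card_S card_Y by simp
  also have "\<dots> = s ^ 3"
  proof -
    obtain k where k: "s = Suc k" using thick by (cases s) auto
    then have "s * s - s = s * k" by simp
    then show ?thesis unfolding k by (simp add: algebra_simps power3_eq_cube)
  qed
  also have "\<dots> = card (carrier G)"
    using order_eq[OF y_opposite] unfolding order_def by simp
  finally have card_eq: "card (\<Union>M\<in>Y. stab (z M)) = card (carrier G)" .
  have "(\<Union>M\<in>Y. stab (z M)) \<subseteq> carrier G" unfolding stab_def by blast
  then show ?thesis by (rule card_subset_eq[OF finite_carrier[OF y_opposite] _ card_eq])
qed

end

sublocale stgq_family \<subseteq> subgroup_partition_mod G S Y "\<lambda>M. stab (z M)"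
proof (rule subgroup_partition_mod.intro[OF is_group subgroup_partition_mod_axioms.intro])
  show "S \<lhd> G" by (rule normal_S)
  show "subgroup (stab (z M)) G" if "M \<in> Y" for M using subgroup_stab[OF z_in[OF that]] .
  show "stab (z M) \<inter> stab (z N) = S" if "M \<in> Y" "N \<in> Y" "M \<noteq> N" for M N
    using stab_z_Int that by blast
  show "(\<Union>M\<in>Y. stab (z M)) = carrier G" by (rule stab_z_cover)
  show "\<exists>a\<in>stab (z M). \<exists>b\<in>stab (z N). q = a \<otimes> b"
    if "M \<in> Y" "N \<in> Y" "M \<noteq> N" "q \<in> carrier G" for M N q
    using stab_mult_stab[OF _ y_opposite z_in col_x_z col_y_z z_in col_x_z col_y_z not_col_z]
      that thick by simp
qed

context stgq_family
begin

lemma derived_subset_S: "derived G (carrier G) \<subseteq> S"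
  using derived_subset_core[OF finite_Y] card_Y thick by simp

lemma one_in_fam_A: "M \<in> Y \<Longrightarrow> \<one> \<in> fam_A G \<phi> M"
  unfolding fam_A_def using ln_act_one mem_Y_iff by simp

lemma fam_A_Int_stab_z:
  assumes M: "M \<in> Y" and N: "N \<in> Y" and MN: "M \<noteq> N"
    and a: "a \<in> fam_A G \<phi> M" and a_stab: "a \<in> stab (z N)"
  shows "a = \<one>"
proof -
  have aG: "a \<in> carrier G" and aM: "ln_act a M = M" using a unfolding fam_A_def by auto
  have M': "M \<in> Lns" "Inc y M" using M mem_Y_iff by auto
  have "\<not> Inc (z N) M" using not_col_z[OF M N MN] collinearI[OF M'(1) Inc_z[OF M]] by blast
  then have "\<exists>!q. q \<in> Pts \<and> Inc q M \<and> col (z N) q"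
    by (rule ex1_collinear_on_line[OF z_in[OF N] M'(1)])
  moreover have "Inc (pt_act a y) M" using Inc_act_iff[OF aG y_in M'(1)] aM M'(2) by simp
  moreover have "col (pt_act a y) (z N)"
    using stab_iff_collinear[OF y_opposite z_in[OF N] col_x_z[OF N] col_y_z[OF N] aG] a_stab by simp
  ultimately have "pt_act a y = y"
    using M'(2) y_in pt_act_in[OF aG y_in] col_y_z[OF N] collinear_commute by blast
  then show ?thesis using regular[OF y_opposite y_opposite] aG pt_act_one[OF y_in] by blast
qed

lemma fam_A_Int_S:
  assumes M: "M \<in> Y"
  shows "fam_A G \<phi> M \<inter> S = {\<one>}"
proof -
  obtain N where N: "N \<in> Y" "N \<noteq> M" using ex_other_line[OF M] by blast
  have "fam_A G \<phi> M \<inter> S \<subseteq> {\<one>}"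
    using fam_A_Int_stab_z[OF M N(1) N(2)[symmetric]]
      S_subset_stab[OF z_in[OF N(1)] col_x_z[OF N(1)]]
    by blast
  moreover have "\<one> \<in> fam_A G \<phi> M \<inter> S"
    using one_in_fam_A[OF M] subgroup.one_closed[OF subgroup_S] by blast
  ultimately show ?thesis by blast
qed

lemma card_fam_A_Int_subset_S:
  assumes "M \<in> Y" and "T \<subseteq> S"
  shows "card (fam_A G \<phi> M \<inter> T) = (if \<one> \<in> T then 1 else 0)"
proof -
  have "fam_A G \<phi> M \<inter> T = {\<one>} \<inter> T" using fam_A_Int_S[OF assms(1)] assms(2) by blast
  then show ?thesis by simp
qed

lemma fam_Astar_Int_subset_S:
  assumes "M \<in> Y" and "T \<subseteq> S"
  shows "fam_Astar G \<phi> Pts Lns Inc x M \<inter> T = T"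
  unfolding fam_Astar_eq_stab using S_subset_stab[OF z_in col_x_z, OF assms(1) assms(1)] assms(2)
  by blast

lemma card_fam_Int_on_U0:
  assumes g: "g \<in> U0 G \<phi> Pts Lns Inc x y" and M: "M \<in> Y"
  defines "D \<equiv> derived G (carrier G)"
  shows "card (fam_A G \<phi> M \<inter> conj_class G g) = (if g = \<one> then 1 else 0)"
    and "card (fam_A G \<phi> M \<inter> l_coset G g D) = (if g \<in> D then 1 else 0)"
    and "fam_Astar G \<phi> Pts Lns Inc x M \<inter> conj_class G g = conj_class G g"
    and "card (fam_Astar G \<phi> Pts Lns Inc x M \<inter> l_coset G g D) = card D"
proof -
  have gS: "g \<in> S" using g U0_subset_S by blast
  have gG: "g \<in> carrier G" using gS S_subset_carrier by blast
  have D: "subgroup D G" unfolding D_def by (simp add: derived_is_subgroup)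
  have class_S: "conj_class G g \<subseteq> S" by (rule conj_class_subset_normal[OF normal_S gS])
  have coset_S: "l_coset G g D \<subseteq> S"
    unfolding l_coset_def D_def using derived_subset_S gS subgroup.m_closed[OF subgroup_S] by auto
  show "card (fam_A G \<phi> M \<inter> conj_class G g) = (if g = \<one> then 1 else 0)"
    using card_fam_A_Int_subset_S[OF M class_S] one_in_conj_class_iff[OF gG] by simp
  show "card (fam_A G \<phi> M \<inter> l_coset G g D) = (if g \<in> D then 1 else 0)"
    using card_fam_A_Int_subset_S[OF M coset_S] one_in_l_coset_iff[OF D gG] by simp
  show "fam_Astar G \<phi> Pts Lns Inc x M \<inter> conj_class G g = conj_class G g"
    by (rule fam_Astar_Int_subset_S[OF M class_S])
  show "card (fam_Astar G \<phi> Pts Lns Inc x M \<inter> l_coset G g D) = card D"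
    using fam_Astar_Int_subset_S[OF M coset_S] card_l_coset[OF subgroup.subset[OF D] gG] by simp
qed

lemma chi_on_U0:
  assumes g: "g \<in> U0 G \<phi> Pts Lns Inc x y"
  defines "D \<equiv> derived G (carrier G)"
  defines "chi \<equiv> (real s + 1) / (2 * real s) *
    (real (card (centralizer_of G g)) * (if g = \<one> then 1 else 0)
     - real (abel_index G) * (if g \<in> D then 1 else 0))"
  shows "chi_S G \<phi> Pts Lns Inc s x y g = chi" and "chi_T G \<phi> Pts Lns Inc s x y g = chi"
proof -
  have gG: "g \<in> carrier G" using g U0_subset_S S_subset_carrier by blast
  define c where "c = real (card (centralizer_of G g))"
  define k where "k = real (card (conj_class G g))"
  define I where "I = real (abel_index G)"
  define d where "d = real (card D)"
  define a :: real where "a = (if g = \<one> then 1 else 0)"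
  define e :: real where "e = (if g \<in> D then 1 else 0)"
  have "card (conj_class G g) * card (centralizer_of G g) = s ^ 3"
    using card_conj_class_mult_card_centralizer[OF gG] order_eq[OF y_opposite] by simp
  moreover have "abel_index G * card D = s ^ 3"
    using lagrange[OF derived_is_subgroup] order_eq[OF y_opposite]
    unfolding abel_index_def D_def by simp
  ultimately have ck: "c * k = I * d"
    unfolding c_def k_def I_def d_def by (metis mult.commute of_nat_mult)
  have "real (card (fam_A G \<phi> M \<inter> conj_class G g)) = a"
    and "real (card (fam_A G \<phi> M \<inter> l_coset G g D)) = e"
    and "real (card (fam_Astar G \<phi> Pts Lns Inc x M \<inter> conj_class G g)) = k"
    and "real (card (fam_Astar G \<phi> Pts Lns Inc x M \<inter> l_coset G g D)) = d" if "M \<in> Y" for M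
    using card_fam_Int_on_U0[OF g that] unfolding a_def e_def k_def d_def D_def by simp_all
  then have "chi_S G \<phi> Pts Lns Inc s x y g =
      1 / (2 * real s ^ 2) * ((real s + 1) * (c * (real s * a + k) - I * (real s * e + d)))"
    and "chi_T G \<phi> Pts Lns Inc s x y g =
      1 / (2 * real s ^ 2) * ((real s + 1) * (c * (real s * a - k) - I * (real s * e - d)))"
    unfolding chi_S_def chi_T_def D_def[symmetric] c_def[symmetric] I_def[symmetric]
    using card_Y by simp_all
  moreover have "chi = (real s + 1) / (2 * real s) * (c * a - I * e)"
    unfolding chi_def a_def e_def c_def I_def by simp
  ultimately show "chi_S G \<phi> Pts Lns Inc s x y g = chi" and "chi_T G \<phi> Pts Lns Inc s x y g = chi"
    using chi_summand_collapse[OF ck] thick by simp_all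
qed

lemma chi_S_on_U0:
  assumes g: "g \<in> U0 G \<phi> Pts Lns Inc x y"
  shows "chi_S G \<phi> Pts Lns Inc s x y g =
    (if g \<notin> derived G (carrier G) then 0
     else if g \<noteq> \<one> then - (real s + 1) / (2 * real s) * real (abel_index G)
     else (real s + 1) / (2 * real s) * (real s ^ 3 - real (abel_index G)))"
proof -
  have "\<one> \<in> derived G (carrier G)"
    using subgroup.one_closed[OF derived_is_subgroup] by simp
  moreover have "centralizer_of G \<one> = carrier G" unfolding centralizer_of_def by auto
  then have "card (centralizer_of G \<one>) = s ^ 3"
    using order_eq[OF y_opposite] unfolding order_def by simp
  ultimately show ?thesis using chi_on_U0(1)[OF g] by (auto simp: field_simps)
qed

end

theorem corollary2p8:
  fixes Pts :: "'p set" and Lns :: "'l set" and Inc :: "'p \<Rightarrow> 'l \<Rightarrow> bool"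
    and G :: "('g, 'm) monoid_scheme" and \<phi> :: "'g \<Rightarrow> ('p \<Rightarrow> 'p) \<times> ('l \<Rightarrow> 'l)"
    and s :: nat and x y :: 'p
  assumes "is_STGQ Pts Lns Inc s x G \<phi>"
    and "even s"
    and "y \<in> Pts" and "\<not> collinear Lns Inc x y"
  shows "\<forall>g\<in>U0 G \<phi> Pts Lns Inc x y.
           chi_S G \<phi> Pts Lns Inc s x y g = chi_T G \<phi> Pts Lns Inc s x y g \<and>
           chi_S G \<phi> Pts Lns Inc s x y g =
             (if g \<notin> derived G (carrier G) then 0
              else if g \<noteq> \<one>\<^bsub>G\<^esub> then - (real s + 1) / (2 * real s) * real (abel_index G)
              else (real s + 1) / (2 * real s) * (real s ^ 3 - real (abel_index G)))"
proof (cases "s = 0")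
  case True
  \<comment> \<open>both sides vanish, since division by zero yields zero\<close>
  then show ?thesis unfolding chi_S_def chi_T_def by simp
next
  case False
  with \<open>even s\<close> have "2 \<le> s" by presburger
  obtain S where "subgroup S G" "card S = s" "\<forall>g\<in>S. is_symmetry Pts Lns Inc x (\<phi> g)"
    using assms(1) unfolding is_STGQ_def by blast
  then interpret stgq_family Pts Lns Inc s x G \<phi> S y
    using assms \<open>2 \<le> s\<close> unfolding is_STGQ_def
    by (intro stgq_family.intro egq.intro stgq_family_axioms.intro) auto
  show ?thesis using chi_on_U0 chi_S_on_U0 by simp
qed

end
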